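(* Let $\mathcal{X}$ be a Banach lattice and, for each $\mathbf w\in\mathbb{R}^n_+$, let $\mathcal{A}_{\mathbf w}$ generate a positive eventually compact strongly continuous semigroup on $\mathcal{X}$, such that $\mathbf w_k\to\mathbf w$ implies $\mathcal{A}_{\mathbf w_k}\to\mathcal{A}_{\mathbf w}$ in the generalised sense. Let $S=\{\mathbf w\in\mathbb{R}^n_+ : s(\mathcal{A}_{\mathbf w})=0\}$ and for $\mathbf w\in S$ let $N_{\mathbf w}=\mathcal{S}_+\cap\ker(\mathcal{A}_{\mathbf w})$. Assume that for every $\mathbf w\in S$ the geometric multiplicity of the eigenvalue $s(\mathcal{A}_{\mathbf w})=0$ equals its algebraic multiplicity and that $\ker(\mathcal{A}_{\mathbf w})$ has a basis of non-negative vectors. Then the set-valued map $F:\mathcal{A}_{\mathbf w}\mapsto N_{\mathbf w}$ ($\mathbf w\in S$) is upper hemicontinuous in the sequential sense: whenever $\mathbf w_k,\mathbf w\in S$, $\mathbf w_k\to\mathbf w$, $u_k\in N_{\mathbf w_k}$ and $u_k\to u$ in $\mathcal{X}$, then $u\in N_{\mathbf w}$.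
   Context: $s(T)$ denotes the spectral bound $\sup\{\operatorname{Re}\lambda:\lambda\in\sigma(T)\}$. $\mathcal{S}_+=\{u\in\mathcal{X}_+:\|u\|=1\}$ is the intersection of the unit sphere with the positive cone. Generalised convergence: $T_n\to T$ if $\bar d(T_n,T)\to0$, where $\bar d(T,S)=\max\{d(G(T),G(S)),d(G(S),G(T))\}$, $G(\cdot)$ is the graph and $d(M,N)=\sup_{u\in M,\|u\|=1}\inf_{v\in N}\|u-v\|$. *)

theory Defs
  imports "HOL-Analysis.Analysis" "HOL-Library.Extended_Nat"
begin

class banach_lattice = banach + ordered_real_vector + lattice +
  assumes norm_lattice_mono: "sup x (- x) \<le> sup y (- y) \<Longrightarrow> norm x \<le> norm y"

type_synonym 'a graph = "('a \<times> 'a) set"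

definition op_dom :: "'a graph \<Rightarrow> 'a set" where
  "op_dom G = {x. \<exists>y. (x, y) \<in> G}"

definition op_ker :: "'a::zero graph \<Rightarrow> 'a set" where
  "op_ker G = {x. (x, 0) \<in> G}"

text \<open>Kernel of the k-th power of the operator: the k-fold relational power of the graph.\<close>
definition op_ker_pow :: "'a::zero graph \<Rightarrow> nat \<Rightarrow> 'a set" where
  "op_ker_pow G k = {x. (x, 0) \<in> G ^^ k}"

definition c0_semigroup :: "(real \<Rightarrow> 'a::real_normed_vector \<Rightarrow> 'a) \<Rightarrow> bool" where
  "c0_semigroup T \<longleftrightarrow>
     (\<forall>t\<ge>0. bounded_linear (T t)) \<and>
     T 0 = id \<and>
     (\<forall>t\<ge>0. \<forall>s\<ge>0. T (t + s) = T t \<circ> T s) \<and>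
     (\<forall>x. continuous_on {0..} (\<lambda>t. T t x))"

definition positive_semigroup :: "(real \<Rightarrow> 'a::{real_vector, order} \<Rightarrow> 'a) \<Rightarrow> bool" where
  "positive_semigroup T \<longleftrightarrow> (\<forall>t\<ge>0. \<forall>x. 0 \<le> x \<longrightarrow> 0 \<le> T t x)"

definition compact_operator :: "('a::real_normed_vector \<Rightarrow> 'a) \<Rightarrow> bool" where
  "compact_operator L \<longleftrightarrow> compact (closure (L ` ball 0 1))"

definition eventually_compact_semigroup :: "(real \<Rightarrow> 'a::real_normed_vector \<Rightarrow> 'a) \<Rightarrow> bool" where
  "eventually_compact_semigroup T \<longleftrightarrow> (\<exists>t0>0. compact_operator (T t0))"

definition generator :: "(real \<Rightarrow> 'a::real_normed_vector \<Rightarrow> 'a) \<Rightarrow> 'a graph" where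
  "generator T = {(x, y). ((\<lambda>t. (1 / t) *\<^sub>R (T t x - x)) \<longlongrightarrow> y) (at_right 0)}"

definition generates_pos_ev_compact_C0 :: "'a::banach_lattice graph \<Rightarrow> bool" where
  "generates_pos_ev_compact_C0 G \<longleftrightarrow>
     (\<exists>T. c0_semigroup T \<and> positive_semigroup T \<and> eventually_compact_semigroup T \<and>
          generator T = G)"

text \<open>The complexification of the real operator A acts on X x X (x + i y) by
  (x,y) |-> (Ax, Ay), domain D(A) x D(A).  For lambda = a + i b, the operator
  lambda - A_C maps (x,y) to (a x - b y - Ax, b x + a y - Ay).  lambda is in the
  resolvent set iff lambda - A_C is a bijection from D(A) x D(A) onto X x X with
  bounded inverse.\<close>
definition resolvent_set :: "'a::real_normed_vector graph \<Rightarrow> complex set" where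
  "resolvent_set G = {z. \<exists>R :: 'a \<times> 'a \<Rightarrow> 'a \<times> 'a. bounded_linear R \<and>
      (\<forall>x x' y y'. (x, x') \<in> G \<longrightarrow> (y, y') \<in> G \<longrightarrow>
         R (Re z *\<^sub>R x - Im z *\<^sub>R y - x', Im z *\<^sub>R x + Re z *\<^sub>R y - y') = (x, y)) \<and>
      (\<forall>f g. \<exists>x' y'. (fst (R (f, g)), x') \<in> G \<and> (snd (R (f, g)), y') \<in> G \<and>
         (Re z *\<^sub>R fst (R (f, g)) - Im z *\<^sub>R snd (R (f, g)) - x',
          Im z *\<^sub>R fst (R (f, g)) + Re z *\<^sub>R snd (R (f, g)) - y') = (f, g))}"

definition op_spectrum :: "'a::real_normed_vector graph \<Rightarrow> complex set" where
  "op_spectrum G = - resolvent_set G"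

text \<open>s(A) = sup of real parts of the spectrum (= -infinity if the spectrum is empty).\<close>
definition spectral_bound :: "'a::real_normed_vector graph \<Rightarrow> ereal" where
  "spectral_bound G = (SUP z\<in>op_spectrum G. ereal (Re z))"

definition vdim :: "'a::real_vector set \<Rightarrow> enat" where
  "vdim V = (if \<exists>B. finite B \<and> span B = span V then enat (dim V) else \<infinity>)"

definition geom_mult_0 :: "'a::real_vector graph \<Rightarrow> enat" where
  "geom_mult_0 G = vdim (op_ker G)"

definition alg_mult_0 :: "'a::real_vector graph \<Rightarrow> enat" where
  "alg_mult_0 G = vdim (\<Union>k. op_ker_pow G k)"

text \<open>d(M,N) = sup over unit u in M of dist(u, N); the sup over the empty set is 0.
  X x X carries the product norm of the library.\<close>
definition gap_d :: "('a::real_normed_vector) set \<Rightarrow> 'a set \<Rightarrow> real" where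
  "gap_d M N = (if {u \<in> M. norm u = 1} = {} then 0
                else (SUP u\<in>{u \<in> M. norm u = 1}. INF v\<in>N. norm (u - v)))"

definition gap_dist :: "'a::real_normed_vector graph \<Rightarrow> 'a graph \<Rightarrow> real" where
  "gap_dist G H = max (gap_d G H) (gap_d H G)"

definition gen_converges :: "(nat \<Rightarrow> 'a::real_normed_vector graph) \<Rightarrow> 'a graph \<Rightarrow> bool" where
  "gen_converges Gs G \<longleftrightarrow> (\<lambda>n. gap_dist (Gs n) G) \<longlonglongrightarrow> 0"

definition pos_sphere :: "'a::{real_normed_vector, order} set" where
  "pos_sphere = {u. 0 \<le> u \<and> norm u = 1}"

definition nonneg_vec :: "real^'n \<Rightarrow> bool" where
  "nonneg_vec w \<longleftrightarrow> (\<forall>i. 0 \<le> w $ i)"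

end

theory Submission
  imports Defs
begin

text \<open>Gap convergence puts the limit \<open>(u, 0)\<close> of the
  unit graph vectors \<open>(u\<^sub>k, 0)\<close> in the closure of the graph of \<open>A\<^sub>w\<close>. For a generator, the
  estimate \<open>\<parallel>T(t)x - x\<parallel> \<le> M t \<parallel>Ax\<parallel>\<close> on \<open>[0, 1]\<close>, obtained from the uniform boundedness
  principle and a mean value inequality for right derivatives, passes to the limit and gives
  \<open>T(t)u = u\<close>, i.e. \<open>A\<^sub>w u = 0\<close>. Finally the positive unit sphere is closed because the
  positive cone of a Banach lattice is.\<close>

lemma uniform_boundedness_principle:
  fixes F :: "('a::banach \<Rightarrow> 'b::real_normed_vector) set"
  assumes lin: "\<And>f. f \<in> F \<Longrightarrow> bounded_linear f"
    and pointwise_bounded: "\<And>x. \<exists>C. \<forall>f\<in>F. norm (f x) \<le> C"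
  shows "\<exists>M. \<forall>f\<in>F. \<forall>x. norm (f x) \<le> M * norm x"
proof -
  define E where "E n = {x. \<forall>f\<in>F. norm (f x) \<le> real n}" for n :: nat
  have closed_E: "closed (E n)" for n
  proof -
    have "closed {x. norm (f x) \<le> real n}" if "f \<in> F" for f
      using linear_continuous_on[OF lin[OF that]]
      by (intro closed_Collect_le continuous_intros) (auto intro: continuous_on_norm)
    moreover have "E n = (\<Inter>f\<in>F. {x. norm (f x) \<le> real n})" by (auto simp: E_def)
    ultimately show ?thesis by auto
  qed
  have cover: "\<Union>(range E) = UNIV"
  proof -
    have "\<exists>n. x \<in> E n" for x
    proof -
      obtain C where "\<forall>f\<in>F. norm (f x) \<le> C" using pointwise_bounded by blast
      moreover obtain n where "C \<le> real n" using real_arch_simple by blast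
      ultimately have "x \<in> E n" by (force simp: E_def)
      then show ?thesis by blast
    qed
    then show ?thesis by blast
  qed
  have "\<exists>n. interior (E n) \<noteq> {}"
  proof (rule ccontr)
    assume "\<not> ?thesis"
    then have "euclidean interior_of \<Union>(range E) = {}"
      by (intro Baire_category_alt)
        (auto simp: completely_metrizable_space_euclidean closed_E closed_closedin[symmetric])
    then show False using cover by simp
  qed
  then obtain n x0 r where r: "r > 0" "ball x0 r \<subseteq> E n"
    by (metis all_not_in_conv mem_interior)
  have "norm (f x) \<le> (4 * real n / r) * norm x" if f: "f \<in> F" for f x
  proof (cases "x = 0")
    case True
    then show ?thesis using lin[OF f] by (simp add: linear_simps)
  next
    case False
    define c where "c = r / (2 * norm x)"
    have c: "c > 0" using False r by (simp add: c_def)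
    have "norm (c *\<^sub>R x) < r" using False r by (simp add: c_def)
    then have "x0 + c *\<^sub>R x \<in> E n" "x0 \<in> E n" using r by (auto simp: dist_norm)
    then have "norm (f (x0 + c *\<^sub>R x)) \<le> n" "norm (f x0) \<le> n" using f by (auto simp: E_def)
    moreover have "f (c *\<^sub>R x) = f (x0 + c *\<^sub>R x) - f x0" using lin[OF f] by (simp add: linear_simps)
    ultimately have "norm (f (c *\<^sub>R x)) \<le> 2 * n"
      using norm_triangle_ineq4[of "f (x0 + c *\<^sub>R x)" "f x0"] by simp
    then have "c * norm (f x) \<le> 2 * n" using lin[OF f] c by (simp add: linear_simps)
    then have "norm (f x) \<le> 2 * n / c" using c by (simp add: field_simps)
    also have "2 * n / c = (4 * real n / r) * norm x" using r False by (simp add: c_def field_simps)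
    finally show ?thesis .
  qed
  then show ?thesis by blast
qed

text \<open>The largest \<open>y\<close> up to which the estimate with slope \<open>B + e\<close> holds cannot lie below \<open>b\<close>,
  since the right difference quotient at \<open>y\<close> is eventually within \<open>e\<close> of a vector of norm
  at most \<open>B\<close>.\<close>

lemma norm_diff_le_right_derivative_bound:
  fixes f :: "real \<Rightarrow> 'a::real_normed_vector"
  assumes ab: "a \<le> b" and cont: "continuous_on {a..b} f"
    and right_deriv: "\<And>s. a \<le> s \<Longrightarrow> s < b \<Longrightarrow>
      \<exists>d. norm d \<le> B \<and> ((\<lambda>h. (1/h) *\<^sub>R (f (s+h) - f s)) \<longlongrightarrow> d) (at_right 0)"
  shows "norm (f b - f a) \<le> B * (b - a)"
proof -
  have slack: "norm (f b - f a) \<le> (B + e) * (b - a)" if e: "e > 0" for e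
  proof -
    define C where "C = B + e"
    define P where "P = {z\<in>{a..b}. norm (f z - f a) \<le> C * (z - a)}"
    define A where "A = {x\<in>{a..b}. {a..x} \<subseteq> P}"
    have closed_P: "closed P" unfolding P_def
      by (intro continuous_on_closed_Collect_le continuous_intros cont)
    have aA: "a \<in> A" using ab by (auto simp: A_def P_def)
    have bdd: "bdd_above A" by (auto simp: A_def bdd_above_def)
    define y where "y = Sup A"
    have ay: "a \<le> y" using aA bdd cSup_upper y_def by blast
    have yb: "y \<le> b" unfolding y_def using aA by (intro cSup_least) (auto simp: A_def)
    have "{a..<y} \<subseteq> P"
    proof
      fix z assume z: "z \<in> {a..<y}"
      then obtain x where "x \<in> A" "z < x" using less_cSup_iff[of A z] aA bdd y_def by auto
      then show "z \<in> P" using z by (auto simp: A_def)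
    qed
    then have up_to_y: "{a..y} \<subseteq> P"
    proof (cases "a = y")
      case False
      then have "closure {a..<y} = {a..y}" using ay by simp
      then show ?thesis using closure_minimal[OF \<open>{a..<y} \<subseteq> P\<close> closed_P] by simp
    qed (use aA in \<open>auto simp: A_def\<close>)
    have "y = b"
    proof (rule ccontr)
      assume "y \<noteq> b"
      then have "y < b" using yb by simp
      then obtain d where d: "norm d \<le> B" "((\<lambda>h. (1/h) *\<^sub>R (f (y+h) - f y)) \<longlongrightarrow> d) (at_right 0)"
        using right_deriv ay by blast
      then have "eventually (\<lambda>h. dist ((1/h) *\<^sub>R (f (y+h) - f y)) d < e) (at_right (0::real))"
        using e by (simp add: tendsto_iff)
      then obtain \<delta> where \<delta>: "\<delta> > 0"
        "\<And>h. 0 < h \<Longrightarrow> h < \<delta> \<Longrightarrow> dist ((1/h) *\<^sub>R (f (y+h) - f y)) d < e"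
        unfolding eventually_at_right_field by auto
      define y' where "y' = min (y + \<delta>/2) b"
      have yy': "y < y'" using \<delta> \<open>y < b\<close> by (simp add: y'_def)
      have "{a..y'} \<subseteq> P"
      proof
        fix z assume z: "z \<in> {a..y'}"
        show "z \<in> P"
        proof (cases "z \<le> y")
          case True then show ?thesis using up_to_y z by auto
        next
          case False
          define h where "h = z - y"
          have h: "0 < h" "h < \<delta>" using False z \<delta> by (auto simp: h_def y'_def)
          have "norm ((1/h) *\<^sub>R (f (y+h) - f y)) \<le> norm d + e"
            using \<delta>(2)[OF h] norm_triangle_ineq2[of "(1/h) *\<^sub>R (f (y+h) - f y)" d]
            by (simp add: dist_norm)
          also have "\<dots> \<le> C" using d by (simp add: C_def)
          finally have "norm (f (y+h) - f y) / h \<le> C" using h by simp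
          then have "norm (f z - f y) \<le> C * (z - y)" using h by (simp add: h_def field_simps)
          moreover have "norm (f y - f a) \<le> C * (y - a)" using up_to_y ay by (auto simp: P_def)
          ultimately have "norm (f z - f a) \<le> C * (z - a)"
            using norm_triangle_ineq[of "f z - f y" "f y - f a"] by (simp add: algebra_simps)
          then show ?thesis using z ay yb y'_def by (auto simp: P_def)
        qed
      qed
      then have "y' \<in> A" using ay yy' by (auto simp: A_def y'_def)
      then have "y' \<le> y" unfolding y_def using bdd by (rule cSup_upper)
      then show False using yy' by simp
    qed
    then have "b \<in> P" using up_to_y ay by auto
    then show ?thesis by (simp add: P_def C_def)
  qed
  show ?thesis
  proof (cases "a = b")
    case False
    then have ba: "b - a > 0" using ab by simp
    show ?thesis
    proof (rule field_le_epsilon)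
      fix e :: real assume "e > 0"
      then have "norm (f b - f a) \<le> (B + e / (b - a)) * (b - a)" using ba by (intro slack) simp
      also have "\<dots> = B * (b - a) + e" using ba by (simp add: field_simps)
      finally show "norm (f b - f a) \<le> B * (b - a) + e" .
    qed
  qed simp
qed

lemma c0_semigroup_bounded_on_unit_interval:
  fixes T :: "real \<Rightarrow> 'a::banach \<Rightarrow> 'a"
  assumes "c0_semigroup T"
  shows "\<exists>M. \<forall>t\<in>{0..1}. \<forall>x. norm (T t x) \<le> M * norm x"
proof -
  have "\<exists>M. \<forall>f\<in>T ` {0..1}. \<forall>x. norm (f x) \<le> M * norm x"
  proof (rule uniform_boundedness_principle)
    show "bounded_linear f" if "f \<in> T ` {0..1}" for f
      using assms that by (auto simp: c0_semigroup_def)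
    fix x
    have "continuous_on {0..1} (\<lambda>t. T t x)"
      using assms by (auto simp: c0_semigroup_def intro: continuous_on_subset)
    then have "bounded ((\<lambda>t. T t x) ` {0..1})"
      by (intro compact_imp_bounded compact_continuous_image) auto
    then show "\<exists>C. \<forall>f\<in>T ` {0..1}. norm (f x) \<le> C"
      by (auto simp: bounded_iff)
  qed
  then show ?thesis by blast
qed

lemma generator_orbit_estimate:
  fixes T :: "real \<Rightarrow> 'a::banach \<Rightarrow> 'a"
  assumes T: "c0_semigroup T" and M: "\<And>s z. s \<in> {0..1} \<Longrightarrow> norm (T s z) \<le> M * norm z"
    and gen: "(x, y) \<in> generator T" and t: "0 \<le> t" "t \<le> 1"
  shows "norm (T t x - x) \<le> M * norm y * t"
proof -
  have bl: "\<And>t. t \<ge> 0 \<Longrightarrow> bounded_linear (T t)" and "T 0 = id"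
    and semi: "\<And>t s. t \<ge> 0 \<Longrightarrow> s \<ge> 0 \<Longrightarrow> T (t + s) = T t \<circ> T s"
    and ct: "continuous_on {0..} (\<lambda>t. T t x)"
    using T by (auto simp: c0_semigroup_def)
  have "norm (T t x - T 0 x) \<le> (M * norm y) * (t - 0)"
  proof (rule norm_diff_le_right_derivative_bound)
    show "continuous_on {0..t} (\<lambda>\<tau>. T \<tau> x)" using ct by (rule continuous_on_subset) auto
    fix s assume s: "0 \<le> s" "s < t"
    have "((\<lambda>h. (1 / h) *\<^sub>R (T h x - x)) \<longlongrightarrow> y) (at_right 0)"
      using gen by (simp add: generator_def)
    then have "((\<lambda>h. T s ((1 / h) *\<^sub>R (T h x - x))) \<longlongrightarrow> T s y) (at_right 0)"
      by (rule bounded_linear.tendsto[OF bl[OF s(1)]])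
    moreover have "\<forall>h>0. T s ((1 / h) *\<^sub>R (T h x - x)) = (1/h) *\<^sub>R (T (s+h) x - T s x)"
      using semi[OF s(1)] bl[OF s(1)] by (simp add: linear_simps)
    ultimately have "((\<lambda>h. (1/h) *\<^sub>R (T (s+h) x - T s x)) \<longlongrightarrow> T s y) (at_right 0)"
      by (elim Lim_transform_eventually) (auto intro: eventually_at_rightI[of 0 1])
    moreover have "norm (T s y) \<le> M * norm y" using M s t by auto
    ultimately show "\<exists>d. norm d \<le> M * norm y \<and>
        ((\<lambda>h. (1/h) *\<^sub>R (T (s+h) x - T s x)) \<longlongrightarrow> d) (at_right 0)"
      by blast
  qed fact
  then show ?thesis using \<open>T 0 = id\<close> by simp
qed

lemma zero_in_generator:
  assumes "c0_semigroup T"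
  shows "(0, 0) \<in> generator T"
proof -
  have "\<forall>h>0. (1 / h) *\<^sub>R (T h 0 - 0) = 0"
    using assms by (auto simp: c0_semigroup_def linear_simps)
  then have "((\<lambda>h. (1 / h) *\<^sub>R (T h 0 - 0)) \<longlongrightarrow> 0) (at_right 0)"
    by (intro tendsto_eventually eventually_at_rightI[of 0 1]) auto
  then show ?thesis by (simp add: generator_def)
qed

lemma generator_kernel_closed:
  fixes T :: "real \<Rightarrow> 'a::banach \<Rightarrow> 'a"
  assumes T: "c0_semigroup T" and u: "(u, 0) \<in> closure (generator T)"
  shows "(u, 0) \<in> generator T"
proof -
  obtain M where M: "\<And>s z. s \<in> {0..1} \<Longrightarrow> norm (T s z) \<le> M * norm z"
    using c0_semigroup_bounded_on_unit_interval[OF T] by blast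
  obtain p where p: "\<And>k. p k \<in> generator T" "p \<longlonglongrightarrow> (u, 0)"
    using u by (auto simp: closure_sequential)
  have fixed: "T t u = u" if t: "0 < t" "t \<le> 1" for t
  proof -
    have "bounded_linear (T t)" using T t by (simp add: c0_semigroup_def)
    then have "(\<lambda>k. norm (T t (fst (p k)) - fst (p k))) \<longlonglongrightarrow> norm (T t u - u)"
      using tendsto_fst[OF p(2)] by (intro tendsto_intros) (auto intro: bounded_linear.tendsto)
    moreover have "(\<lambda>k. M * norm (snd (p k)) * t) \<longlonglongrightarrow> M * norm (0::'a) * t"
      using tendsto_snd[OF p(2)] by (intro tendsto_intros) simp
    moreover have "norm (T t (fst (p k)) - fst (p k)) \<le> M * norm (snd (p k)) * t" for k
      using generator_orbit_estimate[OF T M _ _ t(2), of "fst (p k)" "snd (p k)"] p(1) t by simp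
    ultimately have "norm (T t u - u) \<le> M * norm (0::'a) * t"
      by (intro LIMSEQ_le) auto
    then show ?thesis by simp
  qed
  then have "((\<lambda>h. (1 / h) *\<^sub>R (T h u - u)) \<longlongrightarrow> 0) (at_right 0)"
    by (intro tendsto_eventually eventually_at_rightI[of 0 1]) auto
  then show ?thesis by (simp add: generator_def)
qed

lemma infdist_le_gap_d:
  fixes G H :: "'a::real_normed_vector set"
  assumes "p \<in> G" "norm p = 1" "H \<noteq> {}"
  shows "infdist p H \<le> gap_d G H"
proof -
  let ?S = "{u \<in> G. norm u = 1}"
  have gap: "gap_d G H = (SUP u\<in>?S. infdist u H)"
    using assms by (auto simp: gap_d_def infdist_notempty dist_norm)
  obtain h where "h \<in> H" using assms(3) by blast
  have "infdist u H \<le> 1 + norm h" if "u \<in> ?S" for u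
    using infdist_le[OF \<open>h \<in> H\<close>, of u] norm_triangle_ineq4[of u h] that by (simp add: dist_norm)
  then have "bdd_above ((\<lambda>u. infdist u H) ` ?S)" by (intro bdd_aboveI2[of _ _ "1 + norm h"]) auto
  then show ?thesis unfolding gap using assms by (intro cSUP_upper) auto
qed

lemma gen_converges_limit_in_closure:
  assumes conv: "gen_converges Gs G" and "G \<noteq> {}"
    and ps: "\<And>k. ps k \<in> Gs k" "\<And>k. norm (ps k) = 1" and lim: "ps \<longlonglongrightarrow> p"
  shows "p \<in> closure G"
proof -
  have le: "infdist (ps k) G \<le> gap_dist (Gs k) G" for k
    using infdist_le_gap_d[OF ps \<open>G \<noteq> {}\<close>] unfolding gap_dist_def by (rule max.coboundedI1)
  have "(\<lambda>k. infdist (ps k) G) \<longlonglongrightarrow> 0"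
  proof (rule real_tendsto_sandwich[where f="\<lambda>_. 0" and h="\<lambda>k. gap_dist (Gs k) G"])
    show "(\<lambda>k. gap_dist (Gs k) G) \<longlonglongrightarrow> 0"
      using conv by (simp add: gen_converges_def)
  qed (simp_all add: le infdist_nonneg)
  moreover have "(\<lambda>k. infdist (ps k) G) \<longlonglongrightarrow> infdist p G"
    using lim by (rule tendsto_infdist)
  ultimately have "infdist p G = 0" using LIMSEQ_unique by blast
  then show ?thesis using \<open>G \<noteq> {}\<close> by (simp add: in_closure_iff_infdist_zero)
qed

text \<open>The negative part of a limit is dominated in modulus by \<open>|x\<^sub>k - x|\<close>, hence has norm zero.\<close>

lemma closed_nonneg_cone: "closed {x::'a::banach_lattice. 0 \<le> x}"
proof (rule closed_sequential_limits[THEN iffD2], intro allI impI, elim conjE)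
  fix xs :: "nat \<Rightarrow> 'a" and x
  assume pos: "\<forall>k. xs k \<in> {x. 0 \<le> x}" and lim: "xs \<longlonglongrightarrow> x"
  have abs_nonneg: "0 \<le> sup z (- z)" for z :: 'a
  proof -
    have "z + - z \<le> sup z (- z) + sup z (- z)" by (intro add_mono) auto
    then have "0 \<le> (1/2::real) *\<^sub>R (sup z (- z) + sup z (- z))" by (intro scaleR_nonneg_nonneg) auto
    then show ?thesis by simp
  qed
  define n where "n = sup (- x) 0"
  have "0 \<le> n" by (simp add: n_def)
  then have abs_n: "sup n (- n) = n" by (simp add: sup_absorb1 order_trans[of "- n" 0 n])
  have "norm n \<le> norm (xs k - x)" for k
  proof -
    have "- x \<le> xs k - x" using add_left_mono[of 0 "xs k" "- x"] pos by simp
    also have "\<dots> \<le> sup (xs k - x) (- (xs k - x))" by simp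
    finally have "sup n (- n) \<le> sup (xs k - x) (- (xs k - x))"
      using abs_nonneg[of "xs k - x"] abs_n by (simp add: n_def)
    then show ?thesis by (rule norm_lattice_mono)
  qed
  moreover have "(\<lambda>k. norm (xs k - x)) \<longlonglongrightarrow> 0"
    using lim by (simp add: LIM_zero tendsto_norm_zero)
  ultimately have "norm n \<le> 0" by (intro LIMSEQ_le_const) auto
  then have "- x \<le> 0" unfolding n_def by (metis norm_le_zero_iff sup_ge1)
  then show "x \<in> {x. 0 \<le> x}" by simp
qed

lemma closed_pos_sphere: "closed (pos_sphere :: 'a::banach_lattice set)"
proof -
  have "closed ({x::'a. 0 \<le> x} \<inter> {x. norm x = 1})"
    by (intro closed_Int closed_nonneg_cone closed_Collect_eq continuous_intros)
  moreover have "pos_sphere = {x::'a. 0 \<le> x} \<inter> {x. norm x = 1}" by (auto simp: pos_sphere_def)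
  ultimately show ?thesis by simp
qed

theorem lemma2p7:
  fixes A :: "real^'n \<Rightarrow> 'a::banach_lattice graph"
  assumes gen: "\<And>w. nonneg_vec w \<Longrightarrow> generates_pos_ev_compact_C0 (A w)"
    and cont: "\<And>ws w. (\<forall>k. nonneg_vec (ws k)) \<Longrightarrow> nonneg_vec w \<Longrightarrow> ws \<longlonglongrightarrow> w \<Longrightarrow>
                 gen_converges (\<lambda>k. A (ws k)) (A w)"
    and mult: "\<And>w. nonneg_vec w \<Longrightarrow> spectral_bound (A w) = 0 \<Longrightarrow>
                 geom_mult_0 (A w) = alg_mult_0 (A w)"
    and posbasis: "\<And>w. nonneg_vec w \<Longrightarrow> spectral_bound (A w) = 0 \<Longrightarrow>
                 \<exists>B. B \<subseteq> {x. 0 \<le> x} \<and> independent B \<and> span B = op_ker (A w)"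
  shows "\<forall>ws w us u.
           (\<forall>k. nonneg_vec (ws k) \<and> spectral_bound (A (ws k)) = 0) \<longrightarrow>
           nonneg_vec w \<longrightarrow> spectral_bound (A w) = 0 \<longrightarrow>
           ws \<longlonglongrightarrow> w \<longrightarrow>
           (\<forall>k. us k \<in> pos_sphere \<inter> op_ker (A (ws k))) \<longrightarrow>
           us \<longlonglongrightarrow> u \<longrightarrow>
           u \<in> pos_sphere \<inter> op_ker (A w)"
proof (intro allI impI)
  fix ws w us u
  assume ws: "\<forall>k. nonneg_vec (ws k) \<and> spectral_bound (A (ws k)) = 0"
    and w: "nonneg_vec w" and "ws \<longlonglongrightarrow> w"
    and us: "\<forall>k. us k \<in> pos_sphere \<inter> op_ker (A (ws k))" and "us \<longlonglongrightarrow> u"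
  obtain T where T: "c0_semigroup T" "generator T = A w"
    using gen[OF w] unfolding generates_pos_ev_compact_C0_def by blast
  have "u \<in> pos_sphere"
    using closed_pos_sphere us \<open>us \<longlonglongrightarrow> u\<close> by (auto simp: closed_sequential_limits)
  have "(\<lambda>k. (us k, 0)) \<longlonglongrightarrow> (u, 0::'a)"
    using \<open>us \<longlonglongrightarrow> u\<close> by (intro tendsto_intros)
  then have "(u, 0) \<in> closure (A w)"
    using cont[of ws w] ws w \<open>ws \<longlonglongrightarrow> w\<close> us zero_in_generator[OF T(1)] T(2)
    by (intro gen_converges_limit_in_closure[of "\<lambda>k. A (ws k)"])
      (auto simp: pos_sphere_def op_ker_def)
  then have "(u, 0) \<in> A w" using generator_kernel_closed[OF T(1)] T(2) by simp
  then show "u \<in> pos_sphere \<inter> op_ker (A w)" using \<open>u \<in> pos_sphere\<close> by (simp add: op_ker_def)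
qed

end
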